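(* There exists a $\mathbb Q^\pi$-algebra automorphism $u\mapsto u^\dagger$ of $\mathbf U$ which restricts to the dagger involution on the scalars $\mathbb Q(v)^\pi$ (so $v^\dagger=\pi v$, $\pi^\dagger=\pi$) and satisfies, for all $i\in I$ and $\nu\in Y$, $$E_i^\dagger=\pi_i\tilde J_iE_i,\qquad F_i^\dagger=F_i,\qquad K_\nu^\dagger=J_\nu K_\nu,\qquad J_\nu^\dagger=J_\nu .$$
   Context: Setup. $I$ is a finite set with a partition $I=I_{\bar 0}\sqcup I_{\bar 1}$, $I_{\bar 1}\neq\emptyset$; $p(i)=0$ for $i\in I_{\bar0}$ and $p(i)=1$ for $i\in I_{\bar1}$. There is a symmetric $\mathbb Z$-bilinear form $\nu\cdot\nu'$ on $\mathbb Z[I]$ with $d_i:=\frac{i\cdot i}{2}\in\mathbb Z_{>0}$, $a_{ij}:=\frac{2\,i\cdot j}{i\cdot i}\in\mathbb Z_{\le 0}$ for $i\neq j$, $a_{ij}\in2\mathbb Z$ whenever $i\in I_{\bar1}$, and $d_i\equiv p(i)\pmod 2$ (hence $i\cdot j\in2\mathbb Z$ for all $i,j$). A root datum is fixed: free abelian groups $X,Y$ of finite rank with a perfect pairing $\langle\cdot,\cdot\rangle:Y\times X\to\mathbb Z$, a map $I\to Y$, $i\mapsto i$, with linearly independent image, and a map $I\to X$, $i\mapsto i'$, with $\langle i,j'\rangle=\frac{2\,i\cdot j}{i\cdot i}$. For $\nu=\sum\nu_i i\in\mathbb Z[I]$ put $p(\nu)=\sum\nu_ip(i)\in\mathbb Z/2$,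 $\mathrm{ht}\,\nu=\sum\nu_i$, $\tilde\nu=\sum d_i\nu_i i$, regard $\nu$ as an element of $Y$ via $i\mapsto i$, and put $\nu'=\sum\nu_ii'\in X$. $X^+=\{\lambda\in X:\langle i,\lambda\rangle\ge0\ \forall i\}$; $b_{ij}=1-a_{ij}$. Parameters: $\pi$ is an indeterminate with $\pi^2=1$; $\mathbb Z^\pi=\mathbb Z[\pi]/(\pi^2-1)$, $\mathbb Q^\pi=\mathbb Q[\pi]/(\pi^2-1)$, $\mathbb Q(v)^\pi=\mathbb Q(v)[\pi]/(\pi^2-1)$, $\mathbb A=\mathbb Z^\pi[v,v^{-1}]$. $v_i=v^{d_i}$, $\pi_i=\pi^{d_i}$, $v_\nu=\prod v_i^{\nu_i}$, $\pi_\nu=\prod\pi_i^{\nu_i}$. $[n]_{v,\pi}=\frac{(\pi v)^n-v^{-n}}{\pi v-v^{-1}}$, $[n]^!_{v,\pi}=\prod_{l=1}^n[l]_{v,\pi}$, $\begin{bmatrix}n\\k\end{bmatrix}_{v,\pi}=\prod_{l=n-k+1}^{n}((\pi v)^l-v^{-l})\big/\prod_{m=1}^k((\pi v)^m-v^{-m})$. The bar involution of $\mathbb Q(v)^\pi$ is the $\mathbb Q^\pi$-algebra automorphism $f(v,\pi)\mapsto f(\pi v^{-1},\pi)$. The quantum covering group $\mathbf U$ is the $\mathbb Q(v)^\pi$-algebra with generators $E_i,F_i$ ($i\in I$), $K_\mu,J_\mu$ ($\mu\in Y$) and relations: $K_\mu K_\nu=K_{\mu+\nu}$, $J_\mu J_\nu=J_{\mu+\nu}$,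 $K_0=J_0=J_\nu^2=1$, $J_\mu K_\nu=K_\nu J_\mu$; $J_\mu E_i=\pi^{\langle\mu,i'\rangle}E_iJ_\mu$, $J_\mu F_i=\pi^{-\langle\mu,i'\rangle}F_iJ_\mu$, $K_\mu E_i=v^{\langle\mu,i'\rangle}E_iK_\mu$, $K_\mu F_i=v^{-\langle\mu,i'\rangle}F_iK_\mu$; $E_iF_j-\pi^{p(i)p(j)}F_jE_i=\delta_{ij}\frac{\tilde J_i\tilde K_i-\tilde K_{-i}}{\pi_iv_i-v_i^{-1}}$; and for $i\neq j$, $\sum_{k=0}^{b_{ij}}(-1)^k\pi^{\binom k2p(i)+kp(i)p(j)}\begin{bmatrix}b_{ij}\\k\end{bmatrix}_{v_i,\pi_i}X_i^{b_{ij}-k}X_jX_i^k=0$ for $X=E$ and for $X=F$. Here $\tilde J_\nu=J_{\tilde\nu}$, $\tilde K_\nu=K_{\tilde\nu}$. The dagger involution of $\mathbb Q(v)^\pi$ is the $\mathbb Q^\pi$-algebra automorphism $f(v,\pi)\mapsto f(\pi v,\pi)$. *)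

theory Defs
  imports Main "HOL-Library.Poly_Mapping" "HOL-Library.Function_Algebras" "HOL-Computational_Algebra.Polynomial"
          "HOL-Computational_Algebra.Normalized_Fraction"
          "HOL-Computational_Algebra.Polynomial_Factorial" "HOL-Computational_Algebra.Field_as_Ring"
begin

section \<open>Scalars: Q(v), and Q(v)^pi = Q(v)[pi]/(pi^2-1)\<close>

type_synonym qv = "rat poly fract"   (* the field Q(v) *)

definition vQ :: qv where "vQ = to_fract [:0, 1:]"

definition negv :: "qv \<Rightarrow> qv" where
  "negv x = (case quot_of_fract x of (p, q) \<Rightarrow>
              to_fract (p \<circ>\<^sub>p [:0, -1:]) / to_fract (q \<circ>\<^sub>p [:0, -1:]))"

definition evp :: "qv \<Rightarrow> qv" where "evp f = (f + negv f) / 2"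
definition odp :: "qv \<Rightarrow> qv" where "odp f = (f - negv f) / 2"

(* QP a b represents a + b*pi *)
datatype qvpi = QP (qa: qv) (qb: qv)

instantiation qvpi :: comm_ring_1
begin
definition "0 = QP 0 0"
definition "1 = QP 1 0"
definition "x + y = QP (qa x + qa y) (qb x + qb y)"
definition "x - y = QP (qa x - qa y) (qb x - qb y)"
definition "- x = QP (- qa x) (- qb x)"
definition "x * y = QP (qa x * qa y + qb x * qb y) (qa x * qb y + qb x * qa y)"
instance
  by standard (auto simp: zero_qvpi_def one_qvpi_def plus_qvpi_def minus_qvpi_def
      uminus_qvpi_def times_qvpi_def algebra_simps intro: qvpi.expand)
end

definition piQ :: qvpi where "piQ = QP 0 1"

definition vpw :: "int \<Rightarrow> qvpi" where "vpw n = QP (vQ powi n) 0"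
definition ppw :: "int \<Rightarrow> qvpi" where "ppw n = (if even n then 1 else piQ)"

(* inverse of an invertible element of Q(v)^pi: (a+b pi)^-1 = (a - b pi)/(a^2-b^2) *)
definition qinv :: "qvpi \<Rightarrow> qvpi" where
  "qinv x = QP (qa x / (qa x ^ 2 - qb x ^ 2)) (- qb x / (qa x ^ 2 - qb x ^ 2))"

(* dagger involution f(v,pi) -> f(pi v, pi).  Writing a = a_ev + a_od (even/odd in v),
   a(pi v) = a_ev + pi a_od; hence (a + b pi)^dagger = (a_ev + b_od) + (a_od + b_ev) pi *)
definition dag :: "qvpi \<Rightarrow> qvpi" where
  "dag x = QP (evp (qa x) + odp (qb x)) (odp (qa x) + evp (qb x))"

(* quantum binomial [n k]_{v_i,pi_i} with v_i = v^d, pi_i = pi^d *)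
definition qbinom :: "nat \<Rightarrow> nat \<Rightarrow> int \<Rightarrow> qvpi" where
  "qbinom n k d =
     (\<Prod>l\<in>{n - k + 1..n}. (ppw d * vpw d) ^ l - vpw (- d * int l)) *
     qinv (\<Prod>m\<in>{1..k}. (ppw d * vpw d) ^ m - vpw (- d * int m))"

datatype 'g word = Wd (unwd: "'g list")

instantiation word :: (type) monoid_add
begin
definition "0 = Wd []"
definition "x + y = Wd (unwd x @ unwd y)"
instance by standard (auto simp: zero_word_def plus_word_def)
end

(* Y = X = Z^'r with the standard perfect pairing *)
datatype ('i, 'r) gen = GE 'i | GF 'i | GK "'r \<Rightarrow> int" | GJ "'r \<Rightarrow> int"

type_synonym ('i, 'r) falg = "('i, 'r) gen word \<Rightarrow>\<^sub>0 qvpi"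

definition gen :: "('i, 'r) gen \<Rightarrow> ('i, 'r) falg" where
  "gen g = Poly_Mapping.single (Wd [g]) 1"

definition sc :: "qvpi \<Rightarrow> ('i, 'r) falg \<Rightarrow> ('i, 'r) falg" where
  "sc c x = Poly_Mapping.single 0 c * x"

abbreviation "Eg i \<equiv> gen (GE i)"
abbreviation "Fg i \<equiv> gen (GF i)"
abbreviation "Kg \<mu> \<equiv> gen (GK \<mu>)"
abbreviation "Jg \<mu> \<equiv> gen (GJ \<mu>)"

definition pairing :: "('r::finite \<Rightarrow> int) \<Rightarrow> ('r \<Rightarrow> int) \<Rightarrow> int" where
  "pairing y x = (\<Sum>r\<in>UNIV. y r * x r)"

inductive_set ideal_gen :: "'a::ring set \<Rightarrow> 'a set" for S where
  base: "x \<in> S \<Longrightarrow> x \<in> ideal_gen S"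
| zero: "0 \<in> ideal_gen S"
| add: "x \<in> ideal_gen S \<Longrightarrow> y \<in> ideal_gen S \<Longrightarrow> x + y \<in> ideal_gen S"
| mult: "x \<in> ideal_gen S \<Longrightarrow> a * x * b \<in> ideal_gen S"

definition dI :: "('i \<Rightarrow> 'i \<Rightarrow> int) \<Rightarrow> 'i \<Rightarrow> int" where "dI dot i = dot i i div 2"
definition aI :: "('i \<Rightarrow> 'i \<Rightarrow> int) \<Rightarrow> 'i \<Rightarrow> 'i \<Rightarrow> int" where
  "aI dot i j = (2 * dot i j) div dot i i"
definition pI :: "('i \<Rightarrow> bool) \<Rightarrow> 'i \<Rightarrow> int" where "pI par i = (if par i then 1 else 0)"

definition super_cartan :: "('i::finite \<Rightarrow> 'i \<Rightarrow> int) \<Rightarrow> ('i \<Rightarrow> bool) \<Rightarrow> bool" where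
  "super_cartan dot par \<longleftrightarrow>
     (\<forall>i j. dot i j = dot j i) \<and>
     (\<forall>i. even (dot i i) \<and> dot i i > 0) \<and>
     (\<forall>i j. i \<noteq> j \<longrightarrow> dot i i dvd 2 * dot i j \<and> aI dot i j \<le> 0) \<and>
     (\<forall>i j. i \<noteq> j \<longrightarrow> par i \<longrightarrow> even (aI dot i j)) \<and>
     (\<forall>i. odd (dI dot i) \<longleftrightarrow> par i) \<and>
     (\<exists>i. par i)"

definition root_datum :: "('i::finite \<Rightarrow> 'i \<Rightarrow> int) \<Rightarrow> ('i \<Rightarrow> 'r::finite \<Rightarrow> int) \<Rightarrow>
    ('i \<Rightarrow> 'r \<Rightarrow> int) \<Rightarrow> bool" where
  "root_datum dot yI xI \<longleftrightarrow>
     (\<forall>i j. pairing (yI i) (xI j) = aI dot i j) \<and>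
     (\<forall>c :: 'i \<Rightarrow> int. (\<lambda>r. \<Sum>i\<in>UNIV. c i * yI i r) = 0 \<longrightarrow> c = 0)"

definition ytil :: "('i \<Rightarrow> 'i \<Rightarrow> int) \<Rightarrow> ('i \<Rightarrow> 'r \<Rightarrow> int) \<Rightarrow> 'i \<Rightarrow> 'r \<Rightarrow> int" where
  "ytil dot yI i = (\<lambda>r. dI dot i * yI i r)"

definition serre :: "('i \<Rightarrow> 'i \<Rightarrow> int) \<Rightarrow> ('i \<Rightarrow> bool) \<Rightarrow> ('i \<Rightarrow> ('i, 'r) falg)
     \<Rightarrow> 'i \<Rightarrow> 'i \<Rightarrow> ('i, 'r) falg" where
  "serre dot par X i j = (let b = nat (1 - aI dot i j) in
     (\<Sum>k\<in>{0..b}. sc ((-1) ^ k * ppw (int (k choose 2) * pI par i + int k * pI par i * pI par j)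
                        * qbinom b k (dI dot i))
                   (X i ^ (b - k) * X j * X i ^ k)))"

definition qcg_rels :: "('i::finite \<Rightarrow> 'i \<Rightarrow> int) \<Rightarrow> ('i \<Rightarrow> bool) \<Rightarrow> ('i \<Rightarrow> 'r::finite \<Rightarrow> int) \<Rightarrow>
    ('i \<Rightarrow> 'r \<Rightarrow> int) \<Rightarrow> ('i, 'r) falg set" where
  "qcg_rels dot par yI xI =
     {Kg \<mu> * Kg \<nu> - Kg (\<mu> + \<nu>) | \<mu> \<nu>. True} \<union>
     {Jg \<mu> * Jg \<nu> - Jg (\<mu> + \<nu>) | \<mu> \<nu>. True} \<union>
     {Kg 0 - 1, Jg 0 - 1} \<union>
     {Jg \<nu> * Jg \<nu> - 1 | \<nu>. True} \<union>
     {Jg \<mu> * Kg \<nu> - Kg \<nu> * Jg \<mu> | \<mu> \<nu>. True} \<union>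
     {Jg \<mu> * Eg i - sc (ppw (pairing \<mu> (xI i))) (Eg i * Jg \<mu>) | \<mu> i. True} \<union>
     {Jg \<mu> * Fg i - sc (ppw (- pairing \<mu> (xI i))) (Fg i * Jg \<mu>) | \<mu> i. True} \<union>
     {Kg \<mu> * Eg i - sc (vpw (pairing \<mu> (xI i))) (Eg i * Kg \<mu>) | \<mu> i. True} \<union>
     {Kg \<mu> * Fg i - sc (vpw (- pairing \<mu> (xI i))) (Fg i * Kg \<mu>) | \<mu> i. True} \<union>
     {Eg i * Fg j - sc (ppw (pI par i * pI par j)) (Fg j * Eg i)
        - (if i = j then sc (qinv (ppw (dI dot i) * vpw (dI dot i) - vpw (- dI dot i)))
                           (Jg (ytil dot yI i) * Kg (ytil dot yI i) - Kg (- ytil dot yI i))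
           else 0) | i j. True} \<union>
     {serre dot par Eg i j | i j. i \<noteq> j} \<union>
     {serre dot par Fg i j | i j. i \<noteq> j}"

(* U = falg / qcg_ideal; elements of U are represented by elements of falg *)
definition qcg_ideal where "qcg_ideal dot par yI xI = ideal_gen (qcg_rels dot par yI xI)"

end

theory Submission
  imports Defs
begin

text \<open>
  The dagger is first built on the free algebra as the unique ring endomorphism that is semilinear
  for the dagger involution of the scalars and sends \<open>E\<^sub>i, F\<^sub>i, K\<^sub>\<nu>, J\<^sub>\<nu>\<close> to
  \<open>\<pi>\<^sub>i \<tilde>J\<^sub>i E\<^sub>i, F\<^sub>i, J\<^sub>\<nu> K\<^sub>\<nu>, J\<^sub>\<nu>\<close>. It maps every defining relation of \<open>U\<close> into the
  defining ideal: the \<open>\<tilde>J\<^sub>i\<close> commute with all generators modulo the relations because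
  \<open>\<langle>\<tilde>i, j'\<rangle>\<close> is even; in the relation for \<open>E\<^sub>i F\<^sub>j\<close> the factor \<open>\<pi>\<^sub>i\<close> picked up by
  \<open>(\<pi>\<^sub>i v\<^sub>i - v\<^sub>i\<^sup>-\<^sup>1)\<^sup>\<dagger> = \<pi>\<^sub>i (\<pi>\<^sub>i v\<^sub>i - v\<^sub>i\<^sup>-\<^sup>1)\<close> matches the one carried by \<open>E\<^sub>i\<^sup>\<dagger>\<close>;
  and the quantum binomial coefficients of the Serre relations are dagger-fixed thanks to the
  parity conditions of the super Cartan datum. Hence it induces an endomorphism of \<open>U\<close>.
  Since \<open>J\<^sub>\<nu>\<^sup>2 = 1\<close>, it squares to the identity on generators, hence on all of \<open>U\<close>, so it is an
  automorphism.
\<close>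

section \<open>The dagger involution of the scalars\<close>

definition negx :: "rat poly \<Rightarrow> rat poly" where "negx p = p \<circ>\<^sub>p [:0, -1:]"

lemma negx_negx [simp]: "negx (negx p) = p"
proof -
  have "[:0, -1:] \<circ>\<^sub>p [:0, -1::rat:] = [:0, 1:]"
    by (simp add: pcompose_pCons)
  then show ?thesis unfolding negx_def by (metis pcompose_assoc pcompose_idR)
qed

lemma negx_add [simp]: "negx (p + q) = negx p + negx q"
  and negx_mult [simp]: "negx (p * q) = negx p * negx q"
  and negx_uminus [simp]: "negx (- p) = - negx p"
  and negx_0 [simp]: "negx 0 = 0"
  and negx_1 [simp]: "negx 1 = 1"
  by (simp_all add: negx_def pcompose_add pcompose_mult pcompose_uminus pcompose_1)

lemma negx_eq_0_iff [simp]: "negx p = 0 \<longleftrightarrow> p = 0"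
  by (metis negx_0 negx_negx)

lemma negv_Fract:
  assumes "q \<noteq> 0"
  shows "negv (Fract p q) = Fract (negx p) (negx q)"
proof -
  obtain a b where ab: "quot_of_fract (Fract p q) = (a, b)"
    by (cases "quot_of_fract (Fract p q)")
  have b: "b \<noteq> 0" using snd_quot_of_fract_nonzero[of "Fract p q"] ab by simp
  have "Fract a b = Fract p q" using Fract_quot_of_fract[of "Fract p q"] ab by simp
  then have "negx a * negx q = negx p * negx b"
    using b assms by (simp add: eq_fract flip: negx_mult)
  then have "Fract (negx a) (negx b) = Fract (negx p) (negx q)"
    using b assms by (simp add: eq_fract)
  moreover have "negv (Fract p q) = Fract (negx a) (negx b)"
    unfolding negv_def ab by (simp add: Fract_conv_to_fract negx_def)
  ultimately show ?thesis by simp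
qed

lemma negv_add [simp]: "negv (x + y) = negv x + negv y"
  by (induct x rule: Fract_induct, induct y rule: Fract_induct)
    (simp add: negv_Fract)

lemma negv_mult [simp]: "negv (x * y) = negv x * negv y"
  by (induct x rule: Fract_induct, induct y rule: Fract_induct) (simp add: negv_Fract)

lemma negv_uminus [simp]: "negv (- x) = - negv x"
  by (induct x rule: Fract_induct) (simp add: negv_Fract)

lemma negv_diff [simp]: "negv (x - y) = negv x - negv y"
  by (metis diff_conv_add_uminus negv_add negv_uminus)

lemma negv_0 [simp]: "negv 0 = 0"
  by (metis add_cancel_right_right negv_add)

lemma negv_1 [simp]: "negv 1 = 1"
  using negv_Fract[of 1 1] by (simp add: One_fract_def)

lemma negv_negv [simp]: "negv (negv x) = x"
  by (induct x rule: Fract_induct) (simp add: negv_Fract)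

lemma negv_inverse [simp]: "negv (inverse x) = inverse (negv x)"
proof (induct x rule: Fract_induct)
  case (Fract a b)
  then show ?case
    by (cases "a = 0") (simp_all add: negv_Fract eq_fract)
qed

lemma negv_divide [simp]: "negv (x / y) = negv x / negv y"
  by (simp add: divide_inverse)

lemma negv_numeral [simp]: "negv (numeral n) = numeral n"
  by (induct n) (simp_all only: numeral.simps negv_add negv_1)

lemma negv_vQ [simp]: "negv vQ = - vQ"
proof -
  have vQ: "vQ = Fract [:0, 1:] 1" by (simp add: vQ_def Fract_conv_to_fract)
  have "negv vQ = Fract (negx [:0, 1:]) (negx 1)" unfolding vQ by (rule negv_Fract) simp
  also have "\<dots> = Fract (- [:0, 1:]) 1" by (simp add: negx_def pcompose_pCons pcompose_1)
  also have "\<dots> = - vQ" by (simp add: vQ)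
  finally show ?thesis .
qed

lemma negv_power [simp]: "negv (x ^ n) = negv x ^ n"
  by (induct n) auto

lemma negv_power_int [simp]: "negv (x powi n) = negv x powi n"
  by (simp add: power_int_def)

lemma evp_plus_odp: "evp a + odp a = a"
  by (simp add: evp_def odp_def field_simps)

lemma evp_mult: "evp (a * b) = evp a * evp b + odp a * odp b"
  by (simp add: evp_def odp_def field_simps)

lemma odp_mult: "odp (a * b) = evp a * odp b + odp a * evp b"
  by (simp add: evp_def odp_def field_simps)

lemma evp_add [simp]: "evp (a + b) = evp a + evp b"
  and odp_add [simp]: "odp (a + b) = odp a + odp b"
  and evp_uminus [simp]: "evp (- a) = - evp a"
  and odp_uminus [simp]: "odp (- a) = - odp a"
  and evp_evp [simp]: "evp (evp a) = evp a"
  and odp_evp [simp]: "odp (evp a) = 0"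
  and evp_odp [simp]: "evp (odp a) = 0"
  and odp_odp [simp]: "odp (odp a) = odp a"
  and evp_0 [simp]: "evp 0 = 0"
  and odp_0 [simp]: "odp 0 = 0"
  and evp_1 [simp]: "evp 1 = 1"
  and odp_1 [simp]: "odp 1 = 0"
  by (simp_all add: evp_def odp_def field_simps)

lemma qvpi_eq_iff: "x = y \<longleftrightarrow> qa x = qa y \<and> qb x = qb y"
  by (cases x, cases y) auto

lemma qa_add [simp]: "qa (x + y) = qa x + qa y"
  and qb_add [simp]: "qb (x + y) = qb x + qb y"
  and qa_diff [simp]: "qa (x - y) = qa x - qa y"
  and qb_diff [simp]: "qb (x - y) = qb x - qb y"
  and qa_uminus [simp]: "qa (- x) = - qa x"
  and qb_uminus [simp]: "qb (- x) = - qb x"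
  and qa_mult [simp]: "qa (x * y) = qa x * qa y + qb x * qb y"
  and qb_mult [simp]: "qb (x * y) = qa x * qb y + qb x * qa y"
  and qa_0 [simp]: "qa 0 = 0"
  and qb_0 [simp]: "qb 0 = 0"
  and qa_1 [simp]: "qa 1 = 1"
  and qb_1 [simp]: "qb 1 = 0"
  by (simp_all add: plus_qvpi_def minus_qvpi_def uminus_qvpi_def times_qvpi_def
      zero_qvpi_def one_qvpi_def)

lemma qa_dag [simp]: "qa (dag x) = evp (qa x) + odp (qb x)"
  and qb_dag [simp]: "qb (dag x) = odp (qa x) + evp (qb x)"
  by (simp_all add: dag_def)

lemma dag_add [simp]: "dag (x + y) = dag x + dag y"
  and dag_uminus [simp]: "dag (- x) = - dag x"
  and dag_0 [simp]: "dag 0 = 0"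
  and dag_1 [simp]: "dag 1 = 1"
  and dag_dag [simp]: "dag (dag x) = x"
  by (simp_all add: qvpi_eq_iff evp_plus_odp add.commute)

lemma dag_diff [simp]: "dag (x - y) = dag x - dag y"
  by (metis diff_conv_add_uminus dag_add dag_uminus)

lemma dag_mult [simp]: "dag (x * y) = dag x * dag y"
  by (simp add: qvpi_eq_iff evp_mult odp_mult algebra_simps)

lemma dag_power [simp]: "dag (x ^ n) = dag x ^ n"
  by (induct n) auto

lemma piQ_mult_self [simp]: "piQ * piQ = 1"
  by (simp add: piQ_def qvpi_eq_iff)

lemma dag_ppw [simp]: "dag (ppw n) = ppw n"
  by (simp add: ppw_def piQ_def qvpi_eq_iff)

lemma ppw_mult_self [simp]: "ppw n * ppw n = 1"
  by (simp add: ppw_def piQ_def qvpi_eq_iff)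

lemma ppw_uminus [simp]: "ppw (- n) = ppw n"
  by (simp add: ppw_def)

lemma ppw_power: "ppw a ^ k = ppw (a * int k)"
  by (induct k) (auto simp add: ppw_def algebra_simps)

lemma ppw_even: "even n \<Longrightarrow> ppw n = 1"
  by (simp add: ppw_def)

lemma vpw_add: "vpw (a + b) = vpw a * vpw b"
  by (simp add: vpw_def qvpi_eq_iff power_int_add vQ_def)

lemma vpw_power: "vpw a ^ k = vpw (a * int k)"
  by (induct k) (simp_all add: vpw_add algebra_simps, simp add: vpw_def qvpi_eq_iff)

lemma dag_vpw: "dag (vpw n) = ppw n * vpw n"
  by (auto simp add: vpw_def qvpi_eq_iff evp_def odp_def ppw_def piQ_def power_int_minus_left)

section \<open>Inverses and quantum binomial coefficients\<close>

text \<open>\<open>(a + b\<pi>)(a - b\<pi>) = a\<^sup>2 - b\<^sup>2\<close>, so \<open>a + b\<pi>\<close> is a unit exactly when this norm is nonzero.\<close>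
definition qnorm :: "qvpi \<Rightarrow> qv" where "qnorm x = qa x ^ 2 - qb x ^ 2"

lemma qnorm_mult: "qnorm (x * y) = qnorm x * qnorm y"
  by (simp add: qnorm_def power2_eq_square algebra_simps)

lemma mult_qinv:
  assumes "qnorm x \<noteq> 0"
  shows "x * qinv x = 1"
proof -
  let ?a = "qa x" and ?b = "qb x" and ?N = "qnorm x"
  have "?a * (?a / ?N) + ?b * (- ?b / ?N) = 1"
    using assms by (simp add: qnorm_def power2_eq_square flip: diff_divide_distrib)
  moreover have "?a * (- ?b / ?N) + ?b * (?a / ?N) = 0"
    by (simp add: algebra_simps)
  ultimately show ?thesis
    using assms by (simp add: qvpi_eq_iff qinv_def qnorm_def)
qed

lemma qinv_unique:
  assumes "x * y = 1"
  shows "qinv x = y"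
proof -
  have "qnorm x * qnorm y = 1"
    using qnorm_mult[of x y] by (simp add: assms qnorm_def)
  then have "x * qinv x = 1" using mult_qinv by force
  then have "y * (x * qinv x) = y" by simp
  then show ?thesis using assms by (simp add: mult.assoc[symmetric] mult.commute)
qed

lemma dag_qinv: "x * y = 1 \<Longrightarrow> dag (qinv x) = qinv (dag x)"
  by (metis dag_1 dag_mult qinv_unique)

definition qfactor :: "int \<Rightarrow> nat \<Rightarrow> qvpi" where
  "qfactor d l = (ppw d * vpw d) ^ l - vpw (- d * int l)"

lemma qfactor_eq: "qfactor d l = ppw (d * int l) * vpw (d * int l) - vpw (- (d * int l))"
  by (simp add: qfactor_def power_mult_distrib ppw_power vpw_power)

lemma dag_qfactor: "dag (qfactor d l) = ppw d ^ l * qfactor d l"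
  unfolding qfactor_eq ppw_power by (simp add: dag_vpw algebra_simps)

lemma vQ_power_neq_1: "n > 0 \<Longrightarrow> vQ ^ n \<noteq> 1"
proof
  assume n: "n > 0" and "vQ ^ n = 1"
  moreover have "to_fract (p ^ n) = to_fract p ^ n" for p :: "rat poly"
    by (induct n) simp_all
  ultimately have "[:0, 1::rat:] ^ n = 1"
    by (metis vQ_def to_fract_1 to_fract_eq_iff)
  then have "degree ([:0, 1::rat:] ^ n) = 0" by simp
  then show False using n by (simp add: degree_power_eq)
qed

lemma qnorm_qfactor_nonzero:
  assumes "d > 0" "l > 0"
  shows "qnorm (qfactor d l) \<noteq> 0"
proof -
  define e where "e = d * int l"
  define w where "w = vQ ^ nat e"
  have e: "e > 0" using assms by (simp add: e_def)
  have w: "vQ powi e = w" "vQ powi (- e) = inverse w"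
    using e by (simp_all add: w_def power_int_def power_int_minus power_inverse)
  have "w \<noteq> 0" by (simp add: w_def vQ_def)
  have "w * w \<noteq> 1" "(w * w) * (w * w) \<noteq> 1"
    using vQ_power_neq_1[of "nat e + nat e"] vQ_power_neq_1[of "(nat e + nat e) + (nat e + nat e)"] e
    by (simp_all add: w_def power_add)
  show ?thesis
  proof (cases "even e")
    case True
    then have "qnorm (qfactor d l) = (w - inverse w) ^ 2"
      by (simp add: qfactor_eq e_def[symmetric] ppw_def vpw_def qnorm_def w)
    moreover have "w \<noteq> inverse w"
      using \<open>w * w \<noteq> 1\<close> \<open>w \<noteq> 0\<close> by (metis right_inverse)
    ultimately show ?thesis by simp
  next
    case False
    then have "qnorm (qfactor d l) = inverse w ^ 2 - w ^ 2"
      by (simp add: qfactor_eq e_def[symmetric] ppw_def piQ_def vpw_def qnorm_def w)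
    moreover have "inverse w ^ 2 \<noteq> w ^ 2"
    proof
      assume "inverse w ^ 2 = w ^ 2"
      then have "1 = (w * w) * (w * w)"
        using \<open>w \<noteq> 0\<close> by (simp add: power2_eq_square field_simps)
      then show False using \<open>(w * w) * (w * w) \<noteq> 1\<close> by simp
    qed
    ultimately show ?thesis by simp
  qed
qed

lemma qnorm_prod: "qnorm (prod f A) = (\<Prod>a\<in>A. qnorm (f a))"
  by (induct A rule: infinite_finite_induct) (simp_all add: qnorm_mult qnorm_def[of 1])

lemma dag_prod_qfactor:
  "finite A \<Longrightarrow> dag (\<Prod>l\<in>A. qfactor d l) = ppw d ^ (\<Sum>l\<in>A. l) * (\<Prod>l\<in>A. qfactor d l)"
  by (induct A rule: finite_induct) (simp_all add: dag_qfactor power_add algebra_simps)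

lemma dag_qinv_scaled:
  assumes "x * qinv x = 1" "dag x = ppw d ^ s * x"
  shows "dag (qinv x) = ppw d ^ s * qinv x"
proof -
  have "ppw d ^ s * ppw d ^ s = 1"
    by (metis power_mult_distrib ppw_mult_self power_one)
  then have "dag x * (ppw d ^ s * qinv x) = 1"
    using assms by (metis mult.assoc mult.left_commute mult_1)
  then show ?thesis
    using assms(1) by (metis dag_qinv qinv_unique)
qed

lemma sum_upper_plus_sum_lower:
  fixes k n :: nat
  shows "k \<le> n \<Longrightarrow> (\<Sum>l\<in>{n - k + 1..n}. l) + (\<Sum>m\<in>{1..k}. m) = k * (n + 1)"
proof (induct k)
  case (Suc k)
  then have "{n - Suc k + 1..n} = insert (n - k) {n - k + 1..n}" by auto
  then show ?case using Suc by simp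
qed simp

lemma dag_qbinom:
  assumes "d > 0" "k \<le> n"
  shows "dag (qbinom n k d) = ppw d ^ (k * (n + 1)) * qbinom n k d"
proof -
  define P where "P = (\<Prod>l\<in>{n - k + 1..n}. qfactor d l)"
  define Q where "Q = (\<Prod>l\<in>{1..k}. qfactor d l)"
  have "Q * qinv Q = 1"
    using qnorm_qfactor_nonzero \<open>d > 0\<close> by (intro mult_qinv) (simp add: Q_def qnorm_prod)
  then have "dag (qinv Q) = ppw d ^ (\<Sum>m\<in>{1..k}. m) * qinv Q"
    by (rule dag_qinv_scaled) (simp add: Q_def dag_prod_qfactor)
  moreover have "dag P = ppw d ^ (\<Sum>l\<in>{n - k + 1..n}. l) * P"
    by (simp add: P_def dag_prod_qfactor)
  moreover have "qbinom n k d = P * qinv Q"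
    by (simp add: qbinom_def P_def Q_def qfactor_def)
  ultimately have "dag (qbinom n k d)
      = ppw d ^ ((\<Sum>l\<in>{n - k + 1..n}. l) + (\<Sum>m\<in>{1..k}. m)) * qbinom n k d"
    by (simp add: power_add algebra_simps)
  then show ?thesis
    by (simp only: sum_upper_plus_sum_lower[OF \<open>k \<le> n\<close>])
qed

lemma dag_qinv_qfactor_1:
  assumes "d > 0"
  shows "dag (qinv (ppw d * vpw d - vpw (- d))) = ppw d * qinv (ppw d * vpw d - vpw (- d))"
proof -
  have q: "ppw d * vpw d - vpw (- d) = qfactor d 1" by (simp add: qfactor_def)
  have "qfactor d 1 * qinv (qfactor d 1) = 1"
    using qnorm_qfactor_nonzero[OF assms, of 1] by (simp add: mult_qinv)
  then show ?thesis
    unfolding q using dag_qinv_scaled[of "qfactor d 1" d 1] by (simp add: dag_qfactor)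
qed

text \<open>This is where the parity conditions on the Cartan datum enter the Serre relations.\<close>
lemma dag_qbinom_fixed:
  assumes "d > 0" "k \<le> n" "even d \<or> odd n"
  shows "dag (qbinom n k d) = qbinom n k d"
  using dag_qbinom[OF assms(1,2)] assms(3) by (auto simp: ppw_power ppw_even)

section \<open>Dagger-semilinear endomorphisms of the free algebra\<close>

lemma poly_mapping_single_induct:
  assumes "P 0" "\<And>w c. P (Poly_Mapping.single w c)" "\<And>x y. P x \<Longrightarrow> P y \<Longrightarrow> P (x + y)"
  shows "P x"
proof (induct x rule: update_induct)
  case (update f a b)
  then have "Poly_Mapping.update a b f = f + Poly_Mapping.single a b"
    by (intro poly_mapping_eqI) (auto simp: lookup_update lookup_add lookup_single when_def in_keys_iff)
  then show ?case using update assms(2,3) by simp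
qed (fact assms(1))

lemma single_0_commute: "(Poly_Mapping.single 0 c :: ('i, 'r) falg) * x = x * Poly_Mapping.single 0 c"
  by (induct x rule: poly_mapping_single_induct)
    (simp_all add: mult_single mult.commute distrib_left distrib_right)

lemma sc_mult_left: "sc c x * y = sc c (x * y)"
  by (simp add: sc_def mult.assoc)

lemma sc_mult_right: "x * sc c y = sc c (x * y)"
  unfolding sc_def by (metis mult.assoc single_0_commute)

lemma sc_sc: "sc a (sc b x) = sc (a * b) x"
  by (simp add: sc_def mult_single flip: mult.assoc)

lemmas sc_normalize = sc_mult_left sc_mult_right sc_sc

lemma sc_1 [simp]: "sc 1 x = x"
  and sc_0 [simp]: "sc 0 x = 0"
  and sc_zero [simp]: "sc c 0 = 0"
  and sc_add_scalar: "sc (a + b) x = sc a x + sc b x"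
  and sc_diff: "sc c (x - y) = sc c x - sc c y"
  and sc_single: "sc c (Poly_Mapping.single w d) = Poly_Mapping.single w (c * d)"
  and sc_sum: "sc c (sum f A) = (\<Sum>a\<in>A. sc c (f a))"
  by (simp_all add: sc_def single_add distrib_left distrib_right right_diff_distrib
      mult_single sum_distrib_left)

definition word_eval :: "(('i, 'r) gen \<Rightarrow> ('i, 'r) falg) \<Rightarrow> ('i, 'r) gen word \<Rightarrow> ('i, 'r) falg" where
  "word_eval g w = prod_list (map g (unwd w))"

lemma word_eval_plus: "word_eval g (u + w) = word_eval g u * word_eval g w"
  by (simp add: word_eval_def plus_word_def)

lemma word_eval_0: "word_eval g 0 = 1"
  by (simp add: word_eval_def zero_word_def)

lemma word_eval_gen: "word_eval gen w = Poly_Mapping.single w 1"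
proof -
  have "prod_list (map gen l) = Poly_Mapping.single (Wd l) 1" for l :: "('i, 'r) gen list"
    by (induct l) (simp_all add: gen_def mult_single plus_word_def flip: zero_word_def)
  then show ?thesis by (cases w) (simp add: word_eval_def)
qed

text \<open>The unique ring endomorphism which is \<open>\<dagger>\<close>-semilinear and sends each generator \<open>a\<close> to \<open>g a\<close>.\<close>
definition dag_extend :: "(('i, 'r) gen \<Rightarrow> ('i, 'r) falg) \<Rightarrow> ('i, 'r) falg \<Rightarrow> ('i, 'r) falg" where
  "dag_extend g x = (\<Sum>w\<in>Poly_Mapping.keys x. sc (dag (Poly_Mapping.lookup x w)) (word_eval g w))"

lemma dag_extend_superset:
  assumes "finite A" "Poly_Mapping.keys x \<subseteq> A"
  shows "dag_extend g x = (\<Sum>w\<in>A. sc (dag (Poly_Mapping.lookup x w)) (word_eval g w))"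
  unfolding dag_extend_def
  by (rule sum.mono_neutral_left) (use assms in \<open>auto simp: in_keys_iff\<close>)

lemma dag_extend_add: "dag_extend g (x + y) = dag_extend g x + dag_extend g y"
proof -
  let ?A = "Poly_Mapping.keys x \<union> Poly_Mapping.keys y"
  have "dag_extend g (x + y) = (\<Sum>w\<in>?A. sc (dag (Poly_Mapping.lookup (x + y) w)) (word_eval g w))"
    by (rule dag_extend_superset) (simp_all add: keys_add)
  also have "\<dots> = dag_extend g x + dag_extend g y"
    by (simp add: dag_extend_superset[of ?A] lookup_add sc_add_scalar sum.distrib)
  finally show ?thesis .
qed

lemma dag_extend_0 [simp]: "dag_extend g 0 = 0"
  by (simp add: dag_extend_def)

lemma dag_extend_single: "dag_extend g (Poly_Mapping.single w c) = sc (dag c) (word_eval g w)"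
  by (simp add: dag_extend_def)

lemma dag_extend_uminus: "dag_extend g (- x) = - dag_extend g x"
  by (metis dag_extend_0 dag_extend_add add.right_inverse add_eq_0_iff)

lemma dag_extend_diff: "dag_extend g (x - y) = dag_extend g x - dag_extend g y"
  by (metis dag_extend_add dag_extend_uminus diff_conv_add_uminus)

lemma dag_extend_mult: "dag_extend g (x * y) = dag_extend g x * dag_extend g y"
proof (induct x rule: poly_mapping_single_induct)
  case (2 w c)
  show ?case
    by (induct y rule: poly_mapping_single_induct)
      (simp_all add: distrib_left dag_extend_add mult_single dag_extend_single word_eval_plus
        sc_normalize mult.commute)
qed (simp_all add: distrib_right dag_extend_add)

lemma dag_extend_1: "dag_extend g 1 = 1"
  by (metis dag_extend_single dag_1 word_eval_0 sc_1 single_one)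

lemma dag_extend_sc: "dag_extend g (sc c x) = sc (dag c) (dag_extend g x)"
proof -
  have "dag_extend g (sc c x) = sc (dag c) 1 * dag_extend g x"
    by (simp add: sc_def dag_extend_mult dag_extend_single word_eval_0)
  then show ?thesis by (simp add: sc_mult_left)
qed

lemma dag_extend_power: "dag_extend g (x ^ n) = dag_extend g x ^ n"
  by (induct n) (simp_all add: dag_extend_1 dag_extend_mult)

lemma dag_extend_sum: "dag_extend g (sum f A) = (\<Sum>a\<in>A. dag_extend g (f a))"
  by (induct A rule: infinite_finite_induct) (simp_all add: dag_extend_add)

lemma dag_extend_gen: "dag_extend g (gen a) = g a"
  by (simp add: gen_def dag_extend_single word_eval_def)

lemma dag_extend_word_eval: "dag_extend g (word_eval h w) = word_eval (dag_extend g \<circ> h) w"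
proof -
  have "dag_extend g (prod_list xs) = prod_list (map (dag_extend g) xs)" for xs
    by (induct xs) (simp_all add: dag_extend_1 dag_extend_mult)
  then show ?thesis by (simp add: word_eval_def)
qed

section \<open>Congruence modulo a two-sided ideal\<close>

lemma ideal_gen_mult_left: "x \<in> ideal_gen S \<Longrightarrow> (a :: 'a :: ring_1) * x \<in> ideal_gen S"
  using ideal_gen.mult[of x S a 1] by simp

lemma ideal_gen_mult_right: "x \<in> ideal_gen S \<Longrightarrow> x * (a :: 'a :: ring_1) \<in> ideal_gen S"
  using ideal_gen.mult[of x S 1 a] by simp

lemma ideal_gen_uminus: "x \<in> ideal_gen S \<Longrightarrow> - (x :: 'a :: ring_1) \<in> ideal_gen S"
  using ideal_gen_mult_left[of x S "- 1"] by simp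

lemma ideal_gen_sum: "(\<And>a. a \<in> A \<Longrightarrow> f a \<in> ideal_gen S) \<Longrightarrow> sum f A \<in> ideal_gen S"
  by (induct A rule: infinite_finite_induct) (auto intro: ideal_gen.zero ideal_gen.add)

lemma dag_extend_ideal_gen:
  assumes "\<And>s. s \<in> S \<Longrightarrow> dag_extend g s \<in> ideal_gen S"
  shows "x \<in> ideal_gen S \<Longrightarrow> dag_extend g x \<in> ideal_gen S"
  by (induct x rule: ideal_gen.induct)
    (simp_all add: assms dag_extend_add dag_extend_mult ideal_gen.zero ideal_gen.add ideal_gen.mult)

definition cong_mod :: "'a :: ring_1 set \<Rightarrow> 'a \<Rightarrow> 'a \<Rightarrow> bool" where
  "cong_mod S x y \<longleftrightarrow> x - y \<in> ideal_gen S"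

lemma cong_mod_refl [simp]: "cong_mod S x x"
  by (simp add: cong_mod_def ideal_gen.zero)

lemma cong_mod_base: "x - y \<in> S \<Longrightarrow> cong_mod S x y"
  by (simp add: cong_mod_def ideal_gen.base)

lemma cong_mod_sym: "cong_mod S x y \<Longrightarrow> cong_mod S y x"
  unfolding cong_mod_def by (metis ideal_gen_uminus minus_diff_eq)

lemma cong_mod_trans [trans]: "cong_mod S x y \<Longrightarrow> cong_mod S y z \<Longrightarrow> cong_mod S x z"
  unfolding cong_mod_def using ideal_gen.add[of "x - y" S "y - z"] by simp

text \<open>Mixed transitivity rules; without them calculations fall back to higher-order substitution,
  which does not terminate on large sums.\<close>
lemma cong_mod_eq_trans [trans]: "x = y \<Longrightarrow> cong_mod S y z \<Longrightarrow> cong_mod S x z"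
  and cong_mod_trans_eq [trans]: "cong_mod S x y \<Longrightarrow> y = z \<Longrightarrow> cong_mod S x z"
  by simp_all

lemma cong_mod_add: "cong_mod S x y \<Longrightarrow> cong_mod S x' y' \<Longrightarrow> cong_mod S (x + x') (y + y')"
  unfolding cong_mod_def by (metis ideal_gen.add add_diff_add)

lemma cong_mod_diff: "cong_mod S x y \<Longrightarrow> cong_mod S x' y' \<Longrightarrow> cong_mod S (x - x') (y - y')"
proof -
  have "x - x' - (y - y') = (x - y) + - (x' - y')" by simp
  then show "cong_mod S x y \<Longrightarrow> cong_mod S x' y' \<Longrightarrow> ?thesis"
    unfolding cong_mod_def by (metis ideal_gen.add ideal_gen_uminus)
qed

lemma cong_mod_mult:
  assumes "cong_mod S x y" "cong_mod S x' y'"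
  shows "cong_mod S (x * x') (y * y')"
proof -
  have "x * x' - y * y' = (x - y) * x' + y * (x' - y')"
    by (simp add: algebra_simps)
  then show ?thesis
    using assms unfolding cong_mod_def by (metis ideal_gen.add ideal_gen_mult_left ideal_gen_mult_right)
qed

lemma cong_mod_mult_left: "cong_mod S x' y' \<Longrightarrow> cong_mod S (x * x') (x * y')"
  and cong_mod_mult_right: "cong_mod S x y \<Longrightarrow> cong_mod S (x * x') (y * x')"
  by (simp_all add: cong_mod_mult)

lemma cong_mod_sc: "cong_mod S x y \<Longrightarrow> cong_mod S (sc c x) (sc c y)"
  unfolding sc_def by (simp add: cong_mod_mult_left)

lemma cong_mod_sum: "(\<And>a. a \<in> A \<Longrightarrow> cong_mod S (f a) (h a)) \<Longrightarrow> cong_mod S (sum f A) (sum h A)"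
  unfolding cong_mod_def by (simp add: ideal_gen_sum flip: sum_subtractf)

lemma dag_extend_dag_extend:
  assumes "\<And>a. cong_mod S (dag_extend g (g a)) (gen a)"
  shows "cong_mod S (dag_extend g (dag_extend g x)) x"
proof (induct x rule: poly_mapping_single_induct)
  case (2 w c)
  have "cong_mod S (prod_list (map (dag_extend g \<circ> g) l)) (prod_list (map gen l))" for l
    by (induct l) (simp_all add: assms cong_mod_mult)
  then have "cong_mod S (word_eval (dag_extend g \<circ> g) w) (word_eval gen w)"
    unfolding word_eval_def by simp
  then have "cong_mod S (sc c (word_eval (dag_extend g \<circ> g) w)) (sc c (word_eval gen w))"
    by (rule cong_mod_sc)
  then show ?case
    by (simp add: dag_extend_single dag_extend_sc dag_extend_word_eval word_eval_gen sc_single)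
next
  case (3 x y)
  then show ?case by (simp add: dag_extend_add cong_mod_add)
qed simp

lemma dag_extend_cong:
  assumes "\<And>s. s \<in> S \<Longrightarrow> dag_extend g s \<in> ideal_gen S"
  shows "x - y \<in> ideal_gen S \<Longrightarrow> dag_extend g x - dag_extend g y \<in> ideal_gen S"
  using dag_extend_ideal_gen[OF assms] by (simp flip: dag_extend_diff)

lemma dag_extend_cong_cancel:
  assumes "\<And>s. s \<in> S \<Longrightarrow> dag_extend g s \<in> ideal_gen S"
    and "\<And>a. cong_mod S (dag_extend g (g a)) (gen a)"
    and "dag_extend g x - dag_extend g y \<in> ideal_gen S"
  shows "x - y \<in> ideal_gen S"
proof -
  have "cong_mod S x (dag_extend g (dag_extend g x))"
    by (rule cong_mod_sym, rule dag_extend_dag_extend, rule assms(2))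
  also have "cong_mod S \<dots> (dag_extend g (dag_extend g y))"
    using dag_extend_cong[OF assms(1,3)] by (simp add: cong_mod_def)
  also have "cong_mod S \<dots> y"
    by (rule dag_extend_dag_extend, rule assms(2))
  finally show ?thesis by (simp add: cong_mod_def)
qed

lemma dag_extend_surj_mod:
  assumes "\<And>a. cong_mod S (dag_extend g (g a)) (gen a)"
  shows "\<exists>x. dag_extend g x - y \<in> ideal_gen S"
  using dag_extend_dag_extend[OF assms] by (auto simp: cong_mod_def)

definition commutes_mod :: "'a :: ring_1 set \<Rightarrow> 'a \<Rightarrow> 'a \<Rightarrow> bool" where
  "commutes_mod S x y \<longleftrightarrow> cong_mod S (x * y) (y * x)"

lemma commutes_mod_cong: "commutes_mod S x y \<Longrightarrow> cong_mod S (x * y) (y * x)"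
  and commutes_mod_cong_swap: "commutes_mod S x y \<Longrightarrow> cong_mod S (y * x) (x * y)"
  by (simp_all add: commutes_mod_def cong_mod_sym)

lemma commutes_mod_sym: "commutes_mod S x y \<Longrightarrow> commutes_mod S y x"
  by (simp add: commutes_mod_def cong_mod_sym)

lemma commutes_mod_mult_right:
  assumes "commutes_mod S x y" "commutes_mod S x z"
  shows "commutes_mod S x (y * z)"
proof -
  have "x * (y * z) = (x * y) * z" by (simp add: mult.assoc)
  also have "cong_mod S \<dots> ((y * x) * z)"
    using assms(1) by (simp add: commutes_mod_def cong_mod_mult_right)
  also have "\<dots> = y * (x * z)" by (simp add: mult.assoc)
  also have "cong_mod S \<dots> (y * (z * x))"
    using assms(2) by (simp add: commutes_mod_def cong_mod_mult_left)
  finally show ?thesis by (simp add: commutes_mod_def mult.assoc)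
qed

lemma commutes_mod_power_right: "commutes_mod S x y \<Longrightarrow> commutes_mod S x (y ^ n)"
  by (induct n) (simp_all add: commutes_mod_def[of S x 1] commutes_mod_mult_right)

lemma commutes_mod_power_left: "commutes_mod S x y \<Longrightarrow> commutes_mod S (x ^ n) y"
  by (meson commutes_mod_power_right commutes_mod_sym)

lemma sc_mult_power_cong:
  assumes "commutes_mod S T E"
  shows "cong_mod S ((sc a (T * E)) ^ m) (sc (a ^ m) (T ^ m * E ^ m))"
proof (induct m)
  case (Suc m)
  have "(sc a (T * E)) ^ Suc m = (sc a (T * E)) ^ m * sc a (T * E)"
    by (rule power_Suc2)
  also have "cong_mod S \<dots> (sc (a ^ m) (T ^ m * E ^ m) * sc a (T * E))"
    by (rule cong_mod_mult_right, rule Suc)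
  also have "\<dots> = sc (a ^ Suc m) (T ^ m * (E ^ m * T) * E)"
    by (simp add: sc_normalize ac_simps)
  also have "cong_mod S \<dots> (sc (a ^ Suc m) (T ^ m * (T * E ^ m) * E))"
    by (intro cong_mod_sc cong_mod_mult_right cong_mod_mult_left commutes_mod_cong_swap
        commutes_mod_power_right assms)
  also have "\<dots> = sc (a ^ Suc m) (T ^ Suc m * E ^ Suc m)"
    by (simp del: power_Suc add: power_Suc2 mult.assoc)
  finally show ?case .
qed simp

lemma sc_power_mult_sc_power_cong:
  assumes TE: "commutes_mod S T E" and TE': "commutes_mod S T E'" and T'E: "commutes_mod S T' E"
    and TT': "commutes_mod S T T'"
  shows "cong_mod S ((sc a (T * E)) ^ n * sc a' (T' * E') * (sc a (T * E)) ^ k)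
      (sc (a ^ (n + k) * a') (T ^ (n + k) * T' * (E ^ n * E' * E ^ k)))"
proof -
  let ?c = "a ^ (n + k) * a'"
  have "cong_mod S ((sc a (T * E)) ^ n * sc a' (T' * E') * (sc a (T * E)) ^ k)
      (sc (a ^ n) (T ^ n * E ^ n) * sc a' (T' * E') * sc (a ^ k) (T ^ k * E ^ k))"
    by (rule cong_mod_mult, rule cong_mod_mult_right) (rule sc_mult_power_cong, rule TE)+
  also have "\<dots> = sc ?c (T ^ n * (E ^ n * T') * E' * T ^ k * E ^ k)"
    by (simp add: sc_normalize ac_simps power_add)
  also have "cong_mod S \<dots> (sc ?c (T ^ n * (T' * E ^ n) * E' * T ^ k * E ^ k))"
    by (intro cong_mod_sc cong_mod_mult_right cong_mod_mult_left commutes_mod_cong_swap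
        commutes_mod_power_right T'E)
  also have "\<dots> = sc ?c ((T ^ n * T') * ((E ^ n * E') * T ^ k) * E ^ k)"
    by (simp add: mult.assoc)
  also have "cong_mod S \<dots> (sc ?c ((T ^ n * T') * (T ^ k * (E ^ n * E')) * E ^ k))"
    by (intro cong_mod_sc cong_mod_mult_right cong_mod_mult_left commutes_mod_cong_swap
        commutes_mod_power_left commutes_mod_mult_right commutes_mod_power_right TE TE')
  also have "\<dots> = sc ?c ((T ^ n * (T' * T ^ k)) * (E ^ n * E' * E ^ k))"
    by (simp add: mult.assoc)
  also have "cong_mod S \<dots> (sc ?c ((T ^ n * (T ^ k * T')) * (E ^ n * E' * E ^ k)))"
    by (intro cong_mod_sc cong_mod_mult_right cong_mod_mult_left commutes_mod_cong
        commutes_mod_power_right commutes_mod_sym[OF TT'])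
  also have "\<dots> = sc ?c (T ^ (n + k) * T' * (E ^ n * E' * E ^ k))"
    by (simp add: mult.assoc power_add)
  finally show ?thesis .
qed

section \<open>The dagger of the quantum covering group\<close>

definition dagger_gen :: "('i \<Rightarrow> 'i \<Rightarrow> int) \<Rightarrow> ('i \<Rightarrow> 'r \<Rightarrow> int) \<Rightarrow> ('i, 'r) gen \<Rightarrow> ('i, 'r) falg" where
  "dagger_gen dot yI a = (case a of
      GE i \<Rightarrow> sc (ppw (dI dot i)) (Jg (ytil dot yI i) * Eg i)
    | GF i \<Rightarrow> Fg i
    | GK \<nu> \<Rightarrow> Jg \<nu> * Kg \<nu>
    | GJ \<nu> \<Rightarrow> Jg \<nu>)"

locale qcg_datum =
  fixes dot :: "'i::finite \<Rightarrow> 'i \<Rightarrow> int" and par :: "'i \<Rightarrow> bool"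
    and yI :: "'i \<Rightarrow> 'r::finite \<Rightarrow> int" and xI :: "'i \<Rightarrow> 'r \<Rightarrow> int"
  assumes super_cartan: "super_cartan dot par" and root_datum: "root_datum dot yI xI"
begin

abbreviation "rels \<equiv> qcg_rels dot par yI xI"
abbreviation "dagger \<equiv> dag_extend (dagger_gen dot yI)"
abbreviation "Jt i \<equiv> Jg (ytil dot yI i)"

lemma dI_pos: "dI dot i > 0"
proof -
  have "even (dot i i)" "dot i i > 0"
    using super_cartan by (auto simp: super_cartan_def)
  then show ?thesis by (auto simp: dI_def)
qed

lemma aI_diag: "aI dot i i = 2"
  using dI_pos[of i] by (auto simp: aI_def dI_def)

lemma aI_nonpos: "i \<noteq> j \<Longrightarrow> aI dot i j \<le> 0"
  and even_aI: "i \<noteq> j \<Longrightarrow> par i \<Longrightarrow> even (aI dot i j)"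
  and odd_dI_iff: "odd (dI dot i) \<longleftrightarrow> par i"
  using super_cartan by (simp_all add: super_cartan_def)

lemma even_pairing_ytil: "even (pairing (ytil dot yI i) (xI j))"
proof -
  have "pairing (ytil dot yI i) (xI j) = dI dot i * aI dot i j"
    using root_datum by (simp add: pairing_def ytil_def root_datum_def mult.assoc flip: sum_distrib_left)
  then show ?thesis
    using aI_diag even_aI odd_dI_iff by (cases "i = j") auto
qed

lemma serre_parity:
  assumes "i \<noteq> j"
  shows "even (dI dot i) \<or> odd (nat (1 - aI dot i j))"
proof (cases "par i")
  case True
  then have "even (aI dot i j)" "aI dot i j \<le> 0"
    using assms aI_nonpos even_aI by auto
  then show ?thesis by (simp add: even_nat_iff)
qed (use odd_dI_iff in auto)

lemma rel_KK: "cong_mod rels (Kg \<mu> * Kg \<nu>) (Kg (\<mu> + \<nu>))"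
  and rel_JJ: "cong_mod rels (Jg \<mu> * Jg \<nu>) (Jg (\<mu> + \<nu>))"
  and rel_K0: "cong_mod rels (Kg 0) 1"
  and rel_J0: "cong_mod rels (Jg 0) 1"
  and rel_J_square: "cong_mod rels (Jg \<nu> * Jg \<nu>) 1"
  and rel_JK: "cong_mod rels (Jg \<mu> * Kg \<nu>) (Kg \<nu> * Jg \<mu>)"
  and rel_JE: "cong_mod rels (Jg \<mu> * Eg i) (sc (ppw (pairing \<mu> (xI i))) (Eg i * Jg \<mu>))"
  and rel_JF: "cong_mod rels (Jg \<mu> * Fg i) (sc (ppw (- pairing \<mu> (xI i))) (Fg i * Jg \<mu>))"
  and rel_KE: "cong_mod rels (Kg \<mu> * Eg i) (sc (vpw (pairing \<mu> (xI i))) (Eg i * Kg \<mu>))"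
  and rel_KF: "cong_mod rels (Kg \<mu> * Fg i) (sc (vpw (- pairing \<mu> (xI i))) (Fg i * Kg \<mu>))"
  and rel_EF: "cong_mod rels (Eg i * Fg j - sc (ppw (pI par i * pI par j)) (Fg j * Eg i))
        (if i = j then sc (qinv (ppw (dI dot i) * vpw (dI dot i) - vpw (- dI dot i)))
                          (Jt i * Kg (ytil dot yI i) - Kg (- ytil dot yI i))
         else 0)"
  by (rule cong_mod_base, simp only: qcg_rels_def Un_iff mem_Collect_eq insert_iff, blast)+

lemma rel_serre_E: "i \<noteq> j \<Longrightarrow> cong_mod rels (serre dot par Eg i j) 0"
  by (rule cong_mod_base, simp only: qcg_rels_def Un_iff mem_Collect_eq diff_zero, blast)

lemma serre_F_in_rels: "i \<noteq> j \<Longrightarrow> serre dot par Fg i j \<in> rels"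
  unfolding qcg_rels_def by blast

lemma dagger_E: "dagger (Eg i) = sc (ppw (dI dot i)) (Jt i * Eg i)"
  and dagger_F: "dagger (Fg i) = Fg i"
  and dagger_K: "dagger (Kg \<nu>) = Jg \<nu> * Kg \<nu>"
  and dagger_J: "dagger (Jg \<nu>) = Jg \<nu>"
  by (simp_all add: dag_extend_gen dagger_gen_def)

lemmas dagger_simps = dagger_E dagger_F dagger_K dagger_J dag_extend_mult dag_extend_diff
  dag_extend_sc dag_extend_1

lemma commutes_JJ: "commutes_mod rels (Jg \<mu>) (Jg \<nu>)"
proof -
  have "cong_mod rels (Jg \<mu> * Jg \<nu>) (Jg (\<nu> + \<mu>))" using rel_JJ[of \<mu> \<nu>] by (simp add: add.commute)
  also have "cong_mod rels \<dots> (Jg \<nu> * Jg \<mu>)" by (rule cong_mod_sym, rule rel_JJ)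
  finally show ?thesis by (simp add: commutes_mod_def)
qed

lemma commutes_JK: "commutes_mod rels (Jg \<mu>) (Kg \<nu>)"
  unfolding commutes_mod_def by (rule rel_JK)

text \<open>The sign in the \<open>J\<close>-\<open>E\<close> and \<open>J\<close>-\<open>F\<close> relations is a power of \<open>\<pi>\<close> with the even
  exponent \<open>\<langle>\<tilde>i, j'\<rangle>\<close>.\<close>
lemma commutes_Jt_E: "commutes_mod rels (Jt i) (Eg j)"
  and commutes_Jt_F: "commutes_mod rels (Jt i) (Fg j)"
  using rel_JE[of "ytil dot yI i" j] rel_JF[of "ytil dot yI i" j] even_pairing_ytil[of i j]
  by (simp_all add: commutes_mod_def ppw_even)

lemma rel_J_uminus: "cong_mod rels (Jg (- t)) (Jg t)"
proof -
  have "Jg (- t) = Jg (- t) * 1" by simp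
  also have "cong_mod rels \<dots> (Jg (- t) * (Jg t * Jg t))"
    by (rule cong_mod_mult_left, rule cong_mod_sym, rule rel_J_square)
  also have "\<dots> = (Jg (- t) * Jg t) * Jg t" by (simp add: mult.assoc)
  also have "cong_mod rels \<dots> (Jg (- t + t) * Jg t)" by (rule cong_mod_mult_right, rule rel_JJ)
  also have "cong_mod rels \<dots> (1 * Jg t)" using rel_J0 by (simp add: cong_mod_mult_right del: mult_1)
  finally show ?thesis by (simp only: mult_1_left)
qed

lemma dagger_rel_KK: "dagger (Kg \<mu> * Kg \<nu> - Kg (\<mu> + \<nu>)) \<in> ideal_gen rels"
proof -
  have "Jg \<mu> * Kg \<mu> * (Jg \<nu> * Kg \<nu>) = Jg \<mu> * (Kg \<mu> * Jg \<nu>) * Kg \<nu>" by (simp add: mult.assoc)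
  also have "cong_mod rels \<dots> (Jg \<mu> * (Jg \<nu> * Kg \<mu>) * Kg \<nu>)"
    by (intro cong_mod_mult_right cong_mod_mult_left commutes_mod_cong_swap commutes_JK)
  also have "\<dots> = (Jg \<mu> * Jg \<nu>) * (Kg \<mu> * Kg \<nu>)" by (simp add: mult.assoc)
  also have "cong_mod rels \<dots> (Jg (\<mu> + \<nu>) * Kg (\<mu> + \<nu>))" by (rule cong_mod_mult[OF rel_JJ rel_KK])
  finally show ?thesis by (simp add: dagger_simps cong_mod_def)
qed

lemma dagger_rel_JJ: "dagger (Jg \<mu> * Jg \<nu> - Jg (\<mu> + \<nu>)) \<in> ideal_gen rels"
  and dagger_rel_J0: "dagger (Jg 0 - 1) \<in> ideal_gen rels"
  and dagger_rel_J_square: "dagger (Jg \<nu> * Jg \<nu> - 1) \<in> ideal_gen rels"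
  using rel_JJ rel_J0 rel_J_square by (simp_all add: dagger_simps cong_mod_def)

lemma dagger_rel_K0: "dagger (Kg 0 - 1) \<in> ideal_gen rels"
  using cong_mod_mult[OF rel_J0 rel_K0] by (simp add: dagger_simps cong_mod_def)

lemma dagger_rel_JK: "dagger (Jg \<mu> * Kg \<nu> - Kg \<nu> * Jg \<mu>) \<in> ideal_gen rels"
proof -
  have "Jg \<mu> * (Jg \<nu> * Kg \<nu>) = (Jg \<mu> * Jg \<nu>) * Kg \<nu>" by (simp add: mult.assoc)
  also have "cong_mod rels \<dots> ((Jg \<nu> * Jg \<mu>) * Kg \<nu>)"
    by (intro cong_mod_mult_right commutes_mod_cong commutes_JJ)
  also have "\<dots> = Jg \<nu> * (Jg \<mu> * Kg \<nu>)" by (simp add: mult.assoc)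
  also have "cong_mod rels \<dots> (Jg \<nu> * (Kg \<nu> * Jg \<mu>))" by (intro cong_mod_mult_left rel_JK)
  finally show ?thesis by (simp add: dagger_simps cong_mod_def mult.assoc)
qed

lemma dagger_rel_JE:
  "dagger (Jg \<mu> * Eg i - sc (ppw (pairing \<mu> (xI i))) (Eg i * Jg \<mu>)) \<in> ideal_gen rels"
proof -
  let ?p = "ppw (dI dot i)" and ?n = "ppw (pairing \<mu> (xI i))"
  have "Jg \<mu> * sc ?p (Jt i * Eg i) = sc ?p ((Jg \<mu> * Jt i) * Eg i)"
    by (simp add: sc_normalize mult.assoc)
  also have "cong_mod rels \<dots> (sc ?p ((Jt i * Jg \<mu>) * Eg i))"
    by (intro cong_mod_sc cong_mod_mult_right commutes_mod_cong commutes_JJ)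
  also have "\<dots> = sc ?p (Jt i * (Jg \<mu> * Eg i))" by (simp add: mult.assoc)
  also have "cong_mod rels \<dots> (sc ?p (Jt i * sc ?n (Eg i * Jg \<mu>)))"
    by (intro cong_mod_sc cong_mod_mult_left rel_JE)
  also have "\<dots> = sc ?n (sc ?p (Jt i * Eg i) * Jg \<mu>)" by (simp add: sc_normalize ac_simps)
  finally show ?thesis by (simp add: dagger_simps cong_mod_def)
qed

lemma dagger_rel_JF:
  "dagger (Jg \<mu> * Fg i - sc (ppw (- pairing \<mu> (xI i))) (Fg i * Jg \<mu>)) \<in> ideal_gen rels"
  using rel_JF[of \<mu> i] by (simp add: dagger_simps cong_mod_def del: ppw_uminus)

lemma dagger_rel_KE:
  "dagger (Kg \<mu> * Eg i - sc (vpw (pairing \<mu> (xI i))) (Eg i * Kg \<mu>)) \<in> ideal_gen rels"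
proof -
  let ?p = "ppw (dI dot i)" and ?n = "ppw (pairing \<mu> (xI i))" and ?v = "vpw (pairing \<mu> (xI i))"
  have "Jg \<mu> * Kg \<mu> * sc ?p (Jt i * Eg i) = sc ?p (Jg \<mu> * (Kg \<mu> * Jt i) * Eg i)"
    by (simp add: sc_normalize mult.assoc)
  also have "cong_mod rels \<dots> (sc ?p (Jg \<mu> * (Jt i * Kg \<mu>) * Eg i))"
    by (intro cong_mod_sc cong_mod_mult_right cong_mod_mult_left commutes_mod_cong_swap commutes_JK)
  also have "\<dots> = sc ?p ((Jg \<mu> * Jt i) * (Kg \<mu> * Eg i))" by (simp add: mult.assoc)
  also have "cong_mod rels \<dots> (sc ?p ((Jt i * Jg \<mu>) * (Kg \<mu> * Eg i)))"
    by (intro cong_mod_sc cong_mod_mult_right commutes_mod_cong commutes_JJ)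
  also have "cong_mod rels \<dots> (sc ?p ((Jt i * Jg \<mu>) * sc ?v (Eg i * Kg \<mu>)))"
    by (intro cong_mod_sc cong_mod_mult_left rel_KE)
  also have "\<dots> = sc (?p * ?v) (Jt i * (Jg \<mu> * Eg i) * Kg \<mu>)" by (simp add: sc_normalize mult.assoc)
  also have "cong_mod rels \<dots> (sc (?p * ?v) (Jt i * sc ?n (Eg i * Jg \<mu>) * Kg \<mu>))"
    by (intro cong_mod_sc cong_mod_mult_right cong_mod_mult_left rel_JE)
  also have "\<dots> = sc (?n * ?v) (sc ?p (Jt i * Eg i) * (Jg \<mu> * Kg \<mu>))"
    by (simp add: sc_normalize ac_simps)
  finally show ?thesis by (simp add: dagger_simps cong_mod_def dag_vpw)
qed

lemma dagger_rel_KF: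
  "dagger (Kg \<mu> * Fg i - sc (vpw (- pairing \<mu> (xI i))) (Fg i * Kg \<mu>)) \<in> ideal_gen rels"
proof -
  let ?n = "ppw (- pairing \<mu> (xI i))" and ?v = "vpw (- pairing \<mu> (xI i))"
  have "Jg \<mu> * Kg \<mu> * Fg i = Jg \<mu> * (Kg \<mu> * Fg i)" by (simp add: mult.assoc)
  also have "cong_mod rels \<dots> (Jg \<mu> * sc ?v (Fg i * Kg \<mu>))" by (intro cong_mod_mult_left rel_KF)
  also have "\<dots> = sc ?v ((Jg \<mu> * Fg i) * Kg \<mu>)" by (simp add: sc_normalize mult.assoc)
  also have "cong_mod rels \<dots> (sc ?v (sc ?n (Fg i * Jg \<mu>) * Kg \<mu>))"
    by (intro cong_mod_sc cong_mod_mult_right rel_JF)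
  also have "\<dots> = sc (?n * ?v) (Fg i * (Jg \<mu> * Kg \<mu>))" by (simp add: sc_normalize ac_simps)
  finally show ?thesis by (simp add: dagger_simps cong_mod_def dag_vpw del: ppw_uminus)
qed

lemma dagger_rel_EF:
  "dagger (Eg i * Fg j - sc (ppw (pI par i * pI par j)) (Fg j * Eg i)
      - (if i = j then sc (qinv (ppw (dI dot i) * vpw (dI dot i) - vpw (- dI dot i)))
                          (Jt i * Kg (ytil dot yI i) - Kg (- ytil dot yI i))
         else 0)) \<in> ideal_gen rels"
    (is "dagger (?A - ?B) \<in> _")
proof -
  let ?P = "ppw (pI par i * pI par j)" and ?p = "ppw (dI dot i)"
  have "dagger ?A = sc ?p (Jt i * (Eg i * Fg j)) - sc ?p (sc ?P ((Fg j * Jt i) * Eg i))"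
    by (simp add: dagger_simps sc_normalize ac_simps)
  also have "cong_mod rels \<dots> (sc ?p (Jt i * (Eg i * Fg j)) - sc ?p (sc ?P ((Jt i * Fg j) * Eg i)))"
    by (intro cong_mod_diff cong_mod_refl cong_mod_sc cong_mod_mult_right commutes_mod_cong_swap
        commutes_Jt_F)
  also have "\<dots> = sc ?p (Jt i * ?A)"
    by (simp add: sc_diff right_diff_distrib sc_normalize mult.assoc)
  also have "cong_mod rels \<dots> (sc ?p (Jt i * ?B))"
    by (intro cong_mod_sc cong_mod_mult_left rel_EF)
  also have "cong_mod rels \<dots> (dagger ?B)"
  proof (cases "i = j")
    case True
    let ?t = "ytil dot yI i" and ?q = "qinv (ppw (dI dot i) * vpw (dI dot i) - vpw (- dI dot i))"
    have "sc ?p (Jt i * ?B) = sc (?p * ?q) (Jt i * (Jt i * Kg ?t) - Jt i * Kg (- ?t))"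
      using True by (simp add: sc_normalize right_diff_distrib ac_simps)
    also have "cong_mod rels \<dots> (sc (?p * ?q) (Jt i * (Jt i * Kg ?t) - Jg (- ?t) * Kg (- ?t)))"
      by (intro cong_mod_sc cong_mod_diff cong_mod_refl cong_mod_mult_right rel_J_uminus[THEN cong_mod_sym])
    also have "\<dots> = dagger ?B"
      using True by (simp add: dagger_simps dag_qinv_qfactor_1[OF dI_pos])
    finally show ?thesis .
  qed simp
  finally show ?thesis by (simp add: cong_mod_def dag_extend_diff)
qed

lemma dag_qbinom_serre:
  "i \<noteq> j \<Longrightarrow> k \<le> nat (1 - aI dot i j) \<Longrightarrow>
    dag (qbinom (nat (1 - aI dot i j)) k (dI dot i)) = qbinom (nat (1 - aI dot i j)) k (dI dot i)"
  using dag_qbinom_fixed[OF dI_pos _ serre_parity] by simp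

lemma dagger_serre_F:
  assumes "i \<noteq> j"
  shows "dagger (serre dot par Fg i j) \<in> ideal_gen rels"
proof -
  have "dagger (serre dot par Fg i j) = serre dot par Fg i j"
    unfolding serre_def Let_def dag_extend_sum
    by (rule sum.cong[OF refl]) (simp add: dagger_simps dag_extend_power dag_qbinom_serre[OF assms])
  then show ?thesis using serre_F_in_rels[OF assms] by (simp add: ideal_gen.base)
qed

text \<open>Each monomial of the Serre relation has the same weight, so the dagger multiplies the whole
  relation by one common factor \<open>\<tilde>J\<^sub>i\<^sup>b \<tilde>J\<^sub>j\<close>.\<close>
lemma dagger_serre_E:
  assumes "i \<noteq> j"
  shows "dagger (serre dot par Eg i j) \<in> ideal_gen rels"
proof -
  define b where "b = nat (1 - aI dot i j)"
  define c where "c k = (-1) ^ k * ppw (int (k choose 2) * pI par i + int k * pI par i * pI par j)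
      * qbinom b k (dI dot i)" for k
  define M :: "nat \<Rightarrow> ('i, 'r) falg" where "M k = Eg i ^ (b - k) * Eg j * Eg i ^ k" for k
  let ?p = "ppw (dI dot i)" and ?p' = "ppw (dI dot j)"
  have serre: "serre dot par Eg i j = (\<Sum>k\<in>{0..b}. sc (c k) (M k))"
    unfolding serre_def Let_def b_def c_def M_def ..
  have "dagger (serre dot par Eg i j) = (\<Sum>k\<in>{0..b}. sc (c k)
      ((sc ?p (Jt i * Eg i)) ^ (b - k) * sc ?p' (Jt j * Eg j) * (sc ?p (Jt i * Eg i)) ^ k))"
    unfolding serre M_def dag_extend_sum
    by (rule sum.cong[OF refl])
      (simp add: dagger_simps dag_extend_power c_def b_def dag_qbinom_serre[OF assms])
  also have "cong_mod rels \<dots> (\<Sum>k\<in>{0..b}. sc (c k) (sc (?p ^ b * ?p') (Jt i ^ b * Jt j * M k)))"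
  proof (intro cong_mod_sum cong_mod_sc)
    fix k assume "k \<in> {0..b}"
    then have "b - k + k = b" by simp
    then show "cong_mod rels
        ((sc ?p (Jt i * Eg i)) ^ (b - k) * sc ?p' (Jt j * Eg j) * (sc ?p (Jt i * Eg i)) ^ k)
        (sc (?p ^ b * ?p') (Jt i ^ b * Jt j * M k))"
      using sc_power_mult_sc_power_cong[OF commutes_Jt_E commutes_Jt_E commutes_Jt_E commutes_JJ,
          where a = ?p and n = "b - k" and a' = ?p' and k = k]
      by (simp only: M_def)
  qed
  also have "\<dots> = sc (?p ^ b * ?p') (Jt i ^ b * Jt j * serre dot par Eg i j)"
    unfolding serre sum_distrib_left sc_sum
    by (rule sum.cong[OF refl]) (simp add: sc_normalize mult.commute)
  also have "cong_mod rels \<dots> (sc (?p ^ b * ?p') (Jt i ^ b * Jt j * 0))"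
    by (intro cong_mod_sc cong_mod_mult_left rel_serre_E assms)
  finally show ?thesis by (simp add: cong_mod_def)
qed

lemma dagger_rels:
  assumes "s \<in> rels"
  shows "dagger s \<in> ideal_gen rels"
  using assms[unfolded qcg_rels_def]
  by (elim UnE insertE emptyE CollectE exE conjE; hypsubst)
    (simp_all only: dagger_rel_KK dagger_rel_JJ dagger_rel_K0 dagger_rel_J0 dagger_rel_J_square
      dagger_rel_JK dagger_rel_JE dagger_rel_JF dagger_rel_KE dagger_rel_KF dagger_rel_EF
      dagger_serre_E dagger_serre_F not_False_eq_True)

lemma dagger_dagger_gen: "cong_mod rels (dagger (dagger_gen dot yI a)) (gen a)"
proof (cases a)
  case (GE i)
  have "cong_mod rels (Jt i * Jt i * Eg i) (1 * Eg i)"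
    by (intro cong_mod_mult_right rel_J_square)
  then show ?thesis using GE by (simp add: dagger_gen_def dagger_simps sc_normalize mult.assoc)
next
  case (GK \<nu>)
  have "cong_mod rels (Jg \<nu> * Jg \<nu> * Kg \<nu>) (1 * Kg \<nu>)"
    by (intro cong_mod_mult_right rel_J_square)
  then show ?thesis using GK by (simp add: dagger_gen_def dagger_simps mult.assoc)
qed (simp_all add: dagger_gen_def dagger_simps)

end

theorem mainTheorem1:
  fixes dot :: "'i::finite \<Rightarrow> 'i \<Rightarrow> int" and par :: "'i \<Rightarrow> bool"
    and yI :: "'i \<Rightarrow> 'r::finite \<Rightarrow> int" and xI :: "'i \<Rightarrow> 'r \<Rightarrow> int"
  assumes "super_cartan dot par" and "root_datum dot yI xI"
  defines "R \<equiv> qcg_ideal dot par yI xI"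
  shows "\<exists>\<psi> :: ('i, 'r) falg \<Rightarrow> ('i, 'r) falg.
     (\<forall>x y. x - y \<in> R \<longrightarrow> \<psi> x - \<psi> y \<in> R) \<and>
     (\<forall>x y. \<psi> x - \<psi> y \<in> R \<longrightarrow> x - y \<in> R) \<and>
     (\<forall>y. \<exists>x. \<psi> x - y \<in> R) \<and>
     (\<forall>x y. \<psi> (x + y) - (\<psi> x + \<psi> y) \<in> R) \<and>
     (\<forall>x y. \<psi> (x * y) - \<psi> x * \<psi> y \<in> R) \<and>
     \<psi> 1 - 1 \<in> R \<and>
     (\<forall>c x. \<psi> (sc c x) - sc (dag c) (\<psi> x) \<in> R) \<and>
     (\<forall>i. \<psi> (Eg i) - sc (ppw (dI dot i)) (Jg (ytil dot yI i) * Eg i) \<in> R) \<and>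
     (\<forall>i. \<psi> (Fg i) - Fg i \<in> R) \<and>
     (\<forall>\<nu>. \<psi> (Kg \<nu>) - Jg \<nu> * Kg \<nu> \<in> R) \<and>
     (\<forall>\<nu>. \<psi> (Jg \<nu>) - Jg \<nu> \<in> R)"
proof -
  interpret qcg_datum dot par yI xI
    using assms(1,2) by unfold_locales
  show ?thesis
    unfolding R_def qcg_ideal_def
  proof (intro exI[of _ dagger] conjI allI impI)
    show "x - y \<in> ideal_gen rels \<Longrightarrow> dagger x - dagger y \<in> ideal_gen rels" for x y
      by (rule dag_extend_cong[OF dagger_rels])
    show "dagger x - dagger y \<in> ideal_gen rels \<Longrightarrow> x - y \<in> ideal_gen rels" for x y
      by (rule dag_extend_cong_cancel[OF dagger_rels dagger_dagger_gen])
    show "\<exists>x. dagger x - y \<in> ideal_gen rels" for y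
      by (rule dag_extend_surj_mod[OF dagger_dagger_gen])
  qed (simp_all add: ideal_gen.zero dag_extend_add dag_extend_mult dag_extend_1 dag_extend_sc
    dagger_E dagger_F dagger_K dagger_J)
qed

end
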